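(* Let $\mathbb{\Lambda}=\{\pm\lambda^n:n\in\mathbb{Z}\}$ with $\lambda$ one of: $\lambda=2$; $\lambda=\sigma$ the plastic number; or $\lambda>1$ with $1=\lambda^b-\lambda^a$ for mutually prime integers $0\le a<b\le 62$, $(a,b)\notin\{(1,3),(4,5)\}$. Let $\ast$ be any non-trivial operation of the following form: for $\lambda\neq\sigma$, $(f\ast g)(k)=c\sum_{(p,q)\in\mathbb{\Lambda}^2,\,p+q=1}f(pk)g(qk)$ with $c\neq0$; for $\lambda=\sigma$, $(f\ast g)(k)=c_1\sum_{(p,q)\in T_1}f(pk)g(qk)+c_2\sum_{(p,q)\in T_2}f(pk)g(qk)$ with $(c_1,c_2)\neq(0,0)$. Then $\ast$ is not associative: the identity $(f\ast g)\ast h=f\ast(g\ast h)$ does not hold for all absolutely summable functions $f,g,h$ on $\mathbb{\Lambda}$.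
   Context: The plastic number $\sigma\approx1.325$ is the unique real root of $x^3-x-1=0$. $T_1=\{(\sigma^3,-\sigma),(-\sigma,\sigma^3),(\sigma^2,-\sigma^{-1}),(-\sigma^{-1},\sigma^2),(\sigma^{-3},\sigma^{-2}),(\sigma^{-2},\sigma^{-3})\}$ and $T_2=\{(\sigma^5,-\sigma^4),(-\sigma^4,\sigma^5),(\sigma,-\sigma^{-4}),(-\sigma^{-4},\sigma),(\sigma^{-5},\sigma^{-1}),(\sigma^{-1},\sigma^{-5})\}$. Functions are $f:\mathbb{\Lambda}\to\mathbb{C}$ with $\sum_k|f(k)|<\infty$. *)

theory Defs
  imports "HOL-Analysis.Analysis"
begin

definition plastic :: real where
  "plastic = (THE x::real. x^3 - x - 1 = 0)"

definition Lam :: "real \<Rightarrow> real set" where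
  "Lam l = {x. \<exists>n::int. x = l powi n \<or> x = - (l powi n)}"

definition gen_op :: "real \<Rightarrow> complex \<Rightarrow> (real \<Rightarrow> complex) \<Rightarrow> (real \<Rightarrow> complex) \<Rightarrow> real \<Rightarrow> complex" where
  "gen_op l c f g k = c * (\<Sum>\<^sub>\<infinity>(p,q)\<in>{(p,q). p \<in> Lam l \<and> q \<in> Lam l \<and> p + q = 1}. f (p*k) * g (q*k))"

definition T1 :: "(real \<times> real) set" where
  "T1 = (let s = plastic in
     {(s powi 3, - s), (- s, s powi 3), (s powi 2, - (s powi (-1))), (- (s powi (-1)), s powi 2),
      (s powi (-3), s powi (-2)), (s powi (-2), s powi (-3))})"

definition T2 :: "(real \<times> real) set" where
  "T2 = (let s = plastic in
     {(s powi 5, - (s powi 4)), (- (s powi 4), s powi 5), (s, - (s powi (-4))), (- (s powi (-4)), s),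
      (s powi (-5), s powi (-1)), (s powi (-1), s powi (-5))})"

definition sigma_op :: "complex \<Rightarrow> complex \<Rightarrow> (real \<Rightarrow> complex) \<Rightarrow> (real \<Rightarrow> complex) \<Rightarrow> real \<Rightarrow> complex" where
  "sigma_op c1 c2 f g k =
     c1 * (\<Sum>(p,q)\<in>T1. f (p*k) * g (q*k)) + c2 * (\<Sum>(p,q)\<in>T2. f (p*k) * g (q*k))"

definition assoc_on :: "real set \<Rightarrow> ((real \<Rightarrow> complex) \<Rightarrow> (real \<Rightarrow> complex) \<Rightarrow> real \<Rightarrow> complex) \<Rightarrow> bool" where
  "assoc_on L oper \<longleftrightarrow> (\<forall>f g h. ((\<lambda>x. norm (f x)) summable_on L) \<longrightarrow> ((\<lambda>x. norm (g x)) summable_on L) \<longrightarrow> ((\<lambda>x. norm (h x)) summable_on L) \<longrightarrow>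
      (\<forall>k\<in>L. oper (oper f g) h k = oper f (oper g h) k))"

end

theory Submission
  imports Defs
begin

text \<open>
  Both operations have the form \<open>(f \<star> g)(k) = \<Sum>(p,q)\<in>S. w(p,q) f(pk) g(qk)\<close> with \<open>S\<close>
  on the line \<open>p + q = 1\<close>. Write \<open>\<delta>\<^sub>v\<close> for the indicator of \<open>{v}\<close>. Then
  \<open>\<delta>\<^sub>q \<star> \<delta>\<^bsub>-q\<^esub> = 0\<close> for \<open>q \<noteq> 0\<close>, since \<open>pk = q\<close> and \<open>p'k = -q\<close> with \<open>p + p' = 1\<close> force
  \<open>k = 0\<close>; hence \<open>\<delta>\<^sub>p \<star> (\<delta>\<^sub>q \<star> \<delta>\<^bsub>-q\<^esub>) = 0\<close>. On the other hand
  \<open>((\<delta>\<^sub>p \<star> \<delta>\<^sub>q) \<star> \<delta>\<^bsub>-q\<^esub>)(p) = w(1/p, -q/p) w(p,q)\<close>, which is non-zero as soon as both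
  \<open>(p,q)\<close> and \<open>(1/p, -q/p)\<close> lie in \<open>S\<close> with non-zero weight. An identity \<open>\<lambda>\<^sup>m - \<lambda>\<^sup>n = 1\<close>
  provides such a pair, namely \<open>(\<lambda>\<^sup>m, -\<lambda>\<^sup>n)\<close> and \<open>(\<lambda>\<^bsup>-m\<^esup>, \<lambda>\<^bsup>n-m\<^esup>)\<close>; for the plastic number,
  \<open>\<sigma>\<^sup>3 - \<sigma> = 1\<close> gives one in \<open>T1\<close> and \<open>\<sigma>\<^sup>5 - \<sigma>\<^sup>4 = 1\<close> one in \<open>T2\<close>.
\<close>

lemma infsum_single:
  fixes f :: "'a \<Rightarrow> 'b::{comm_monoid_add,t2_space}"
  assumes "\<And>x. x \<in> A \<Longrightarrow> x \<noteq> a \<Longrightarrow> f x = 0"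
  shows "infsum f A = (if a \<in> A then f a else 0)"
proof -
  have "infsum f A = infsum f (A \<inter> {a})"
    by (rule infsum_cong_neutral) (use assms in auto)
  then show ?thesis by (cases "a \<in> A") auto
qed

lemma summable_on_norm_indicator_singleton:
  "(\<lambda>x. norm (indicator {a} x :: 'b::real_normed_algebra_1)) summable_on A"
proof -
  have "(\<lambda>x. norm (indicator {a} x :: 'b)) summable_on (A \<inter> {a})" by simp
  moreover have "(\<lambda>x. norm (indicator {a} x :: 'b)) summable_on (A \<inter> {a}) \<longleftrightarrow>
      (\<lambda>x. norm (indicator {a} x :: 'b)) summable_on A"
    by (rule summable_on_cong_neutral) auto
  ultimately show ?thesis by simp
qed

lemma power_int_diff_eq_1_rescale:
  fixes l :: real
  assumes "l \<noteq> 0" "l powi m - l powi n = 1"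
  shows "l powi (m - n) - l powi (- n) = 1" "l powi (- m) + l powi (n - m) = 1"
proof -
  have "l powi (m - n) - l powi (- n) = (l powi m - 1) / l powi n"
    using assms(1) by (simp add: power_int_diff power_int_minus_divide diff_divide_distrib)
  also have "l powi m - 1 = l powi n" using assms(2) by simp
  finally show "l powi (m - n) - l powi (- n) = 1" using assms(1) by simp
  have "l powi (- m) + l powi (n - m) = (1 + l powi n) / l powi m"
    using assms(1) by (simp add: power_int_diff power_int_minus_divide add_divide_distrib)
  also have "1 + l powi n = l powi m" using assms(2) by simp
  finally show "l powi (- m) + l powi (n - m) = 1" using assms(1) by simp
qed

lemma power_int_eq_iff:
  fixes l :: real
  assumes "l > 1"
  shows "l powi m = l powi n \<longleftrightarrow> m = n"
  using power_int_strict_increasing[OF _ assms] by (metis linorder_neqE order_less_irrefl)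

lemma power_int_neq_uminus_power_int:
  fixes l :: real
  assumes "l > 0"
  shows "l powi m \<noteq> - (l powi n)"
  using zero_less_power_int[OF assms, of m] zero_less_power_int[OF assms, of n] by linarith

lemma power_int_in_Lam: "l powi n \<in> Lam l" "- (l powi n) \<in> Lam l"
  unfolding Lam_def by blast+

definition kernel_op :: "(real \<times> real) set \<Rightarrow> (real \<times> real \<Rightarrow> complex) \<Rightarrow>
    (real \<Rightarrow> complex) \<Rightarrow> (real \<Rightarrow> complex) \<Rightarrow> real \<Rightarrow> complex" where
  "kernel_op S w f g k = (\<Sum>\<^sub>\<infinity>(p,q)\<in>S. w (p,q) * f (p*k) * g (q*k))"

lemma kernel_op_indicator_right:
  assumes S: "S \<subseteq> {(p,q). p + q = 1}" and "k \<noteq> 0"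
  shows "kernel_op S w f (indicator {b}) k =
    (if (1 - b/k, b/k) \<in> S then w (1 - b/k, b/k) * f (k - b) else 0)"
  unfolding kernel_op_def
proof (subst infsum_single[where a = "(1 - b/k, b/k)"])
  fix x assume "x \<in> S" "x \<noteq> (1 - b/k, b/k)"
  then obtain p q where x: "x = (p,q)" "p = 1 - q" "(p,q) \<noteq> (1 - b/k, b/k)"
    using S by fastforce
  have "q*k \<noteq> b"
  proof
    assume "q*k = b"
    then have "q = b/k" using \<open>k \<noteq> 0\<close> by (simp add: eq_divide_eq)
    with x show False by simp
  qed
  then show "(case x of (p,q) \<Rightarrow> w (p,q) * f (p*k) * indicator {b} (q*k)) = 0"
    using x by simp
qed (use \<open>k \<noteq> 0\<close> in \<open>auto simp: algebra_simps\<close>)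

lemma kernel_op_indicator_opposite:
  assumes S: "S \<subseteq> {(p,q). p + q = 1}" and "v \<noteq> 0"
  shows "kernel_op S w (indicator {v}) (indicator {-v}) k = 0"
proof (cases "k = 0")
  case True
  then show ?thesis using \<open>v \<noteq> 0\<close> by (simp add: kernel_op_def case_prod_unfold)
next
  case False
  then show ?thesis using \<open>v \<noteq> 0\<close> by (simp add: kernel_op_indicator_right[OF S])
qed

lemma kernel_op_not_assoc:
  assumes S: "S \<subseteq> {(p,q). p + q = 1}"
    and pq: "(p,q) \<in> S" "(1/p, -q/p) \<in> S"
    and "p \<in> L" "p \<noteq> 0" "q \<noteq> 0"
    and "w (p,q) \<noteq> 0" "w (1/p, -q/p) \<noteq> 0"
  shows "\<not> assoc_on L (kernel_op S w)"
proof
  let ?op = "kernel_op S w"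
  have "1 - q = p" using S pq by auto
  assume "assoc_on L ?op"
  then have "?op (?op (indicator {p}) (indicator {q})) (indicator {-q}) p =
      ?op (indicator {p}) (?op (indicator {q}) (indicator {-q})) p"
    using \<open>p \<in> L\<close> unfolding assoc_on_def by (blast intro: summable_on_norm_indicator_singleton)
  also have "\<dots> = 0"
    using kernel_op_indicator_opposite[OF S \<open>q \<noteq> 0\<close>] by (simp add: kernel_op_def case_prod_unfold)
  also have "?op (?op (indicator {p}) (indicator {q})) (indicator {-q}) p =
      w (1/p, -q/p) * ?op (indicator {p}) (indicator {q}) 1"
  proof -
    have "1 - -q/p = 1/p" "p - -q = 1" using \<open>1 - q = p\<close> \<open>p \<noteq> 0\<close> by (auto simp: field_simps)
    then show ?thesis
      using kernel_op_indicator_right[OF S \<open>p \<noteq> 0\<close>, of w _ "-q"] pq by simp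
  qed
  also have "?op (indicator {p}) (indicator {q}) 1 = w (p,q)"
    using kernel_op_indicator_right[OF S one_neq_zero, of w _ q] pq \<open>1 - q = p\<close> by simp
  finally show False using assms by simp
qed

lemma kernel_op_not_assoc_power_int:
  fixes l :: real
  assumes S: "S \<subseteq> {(p,q). p + q = 1}" and "l \<noteq> 0"
    and "(l powi m, - (l powi n)) \<in> S" "(l powi (- m), l powi (n - m)) \<in> S"
    and "w (l powi m, - (l powi n)) \<noteq> 0" "w (l powi (- m), l powi (n - m)) \<noteq> 0"
  shows "\<not> assoc_on (Lam l) (kernel_op S w)"
proof -
  have "(1 / l powi m, - (- (l powi n)) / l powi m) = (l powi (- m), l powi (n - m))"
    using \<open>l \<noteq> 0\<close> by (simp add: power_int_diff power_int_minus_divide)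
  with assms show ?thesis
    by (intro kernel_op_not_assoc[OF S, where p = "l powi m" and q = "- (l powi n)"])
      (simp_all add: power_int_in_Lam)
qed

lemma gen_op_eq_kernel_op:
  "gen_op l c = kernel_op {(p,q). p \<in> Lam l \<and> q \<in> Lam l \<and> p + q = 1} (\<lambda>_. c)"
  by (simp add: fun_eq_iff gen_op_def kernel_op_def case_prod_unfold mult.assoc infsum_cmult_right')

lemma gen_op_not_assoc:
  assumes "l \<noteq> 0" "l powi m - l powi n = 1" "c \<noteq> 0"
  shows "\<not> assoc_on (Lam l) (gen_op l c)"
  unfolding gen_op_eq_kernel_op
  by (rule kernel_op_not_assoc_power_int)
    (use assms power_int_diff_eq_1_rescale(2)[OF assms(1,2)] in \<open>auto simp: power_int_in_Lam\<close>)

lemma cubic_root_gt_1: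
  fixes x :: real
  assumes "x^3 = x + 1"
  shows "x > 1"
proof (rule ccontr)
  assume "\<not> x > 1"
  have cube: "x^3 = x * x^2" by (simp add: power3_eq_cube power2_eq_square)
  show False
  proof (cases "x \<ge> 0")
    case True
    then have "x^2 \<le> 1" using \<open>\<not> x > 1\<close> by (simp add: power_le_one)
    then have "x * x^2 \<le> x" using True by (simp add: mult_left_le)
    with assms cube show False by simp
  next
    case False
    then have "x^3 < 0" by (simp add: power_less_zero_eq)
    then have "1 < - x" using assms by simp
    then have "1 < x^2" using one_less_power[of "- x" 2] by simp
    then have "x * x^2 < x" using False by (simp add: mult_less_cancel_left)
    with assms cube show False by simp
  qed
qed

lemma plastic_cube: "plastic^3 = plastic + 1"
proof -
  obtain x :: real where x: "x^3 - x - 1 = 0"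
    using IVT[of "\<lambda>x::real. x^3 - x - 1" 1 0 2] by (auto simp: continuous_intros)
  have "y = x" if y: "y^3 - y - 1 = 0" for y :: real
  proof (rule ccontr)
    assume "y \<noteq> x"
    moreover have "(y - x) * (y^2 + y*x + x^2 - 1) = 0"
      using x y by (simp add: algebra_simps power2_eq_square power3_eq_cube)
    ultimately have "y^2 + y*x + x^2 = 1" by simp
    moreover have "y > 1" "x > 1" using cubic_root_gt_1 x y by auto
    then have "y^2 > 1" "y*x > 0" "x^2 > 0" by simp_all
    ultimately show False by linarith
  qed
  then have "plastic = x" unfolding plastic_def using x by blast
  with x show ?thesis by simp
qed

lemma plastic_gt_1: "plastic > 1"
  using cubic_root_gt_1 plastic_cube .

lemma T1_T2_on_line: "T1 \<union> T2 \<subseteq> {(p,q). p + q = 1}"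
proof -
  have "plastic \<noteq> 0" using plastic_gt_1 by simp
  moreover have "plastic powi 3 - plastic powi 1 = 1" "plastic powi 5 - plastic powi 4 = 1"
    using plastic_cube by (simp_all add: eval_nat_numeral algebra_simps)
  ultimately have "plastic powi 3 - plastic = 1" "plastic powi 2 - plastic powi -1 = 1"
      "plastic powi -3 + plastic powi -2 = 1" "plastic powi 5 - plastic powi 4 = 1"
      "plastic - plastic powi -4 = 1" "plastic powi -5 + plastic powi -1 = 1"
    using power_int_diff_eq_1_rescale[of plastic 3 1] power_int_diff_eq_1_rescale[of plastic 5 4]
    by simp_all
  then show ?thesis
    unfolding T1_def T2_def Let_def by (auto simp: add.commute)
qed

lemma T1_T2_disjoint: "T1 \<inter> T2 = {}"
proof (rule equals0I)
  fix x assume "x \<in> T1 \<inter> T2"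
  then obtain p q where "(p,q) \<in> T1" "(p,q) \<in> T2" "x = (p,q)" by (cases x) auto
  note inj = power_int_eq_iff[OF plastic_gt_1]
  note neg = power_int_neq_uminus_power_int[OF order.strict_trans[OF zero_less_one plastic_gt_1]]
  from \<open>(p,q) \<in> T1\<close> have "p \<in> {plastic powi 3, - (plastic powi 1), plastic powi 2,
      - (plastic powi -1), plastic powi -3, plastic powi -2}"
    unfolding T1_def Let_def by auto
  moreover from \<open>(p,q) \<in> T2\<close> have "p \<in> {plastic powi 5, - (plastic powi 4), plastic powi 1,
      - (plastic powi -4), plastic powi -5, plastic powi -1}"
    unfolding T2_def Let_def by auto
  ultimately show False
    by (auto simp only: insert_iff empty_iff inj neg neg[symmetric] neg_equal_iff_equal)
qed

lemma sigma_op_eq_kernel_op: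
  "sigma_op c1 c2 = kernel_op (T1 \<union> T2) (\<lambda>pq. if pq \<in> T1 then c1 else c2)"
proof (intro ext)
  fix f g :: "real \<Rightarrow> complex" and k :: real
  define X where "X = (\<lambda>(p,q). f (p*k) * g (q*k))"
  have fin: "finite T1" "finite T2" by (simp_all add: T1_def T2_def)
  have "sigma_op c1 c2 f g k = (\<Sum>pq\<in>T1. c1 * X pq) + (\<Sum>pq\<in>T2. c2 * X pq)"
    unfolding sigma_op_def X_def by (simp add: sum_distrib_left)
  also have "\<dots> = (\<Sum>pq\<in>T1 \<union> T2. (if pq \<in> T1 then c1 else c2) * X pq)"
    unfolding sum.union_disjoint[OF fin T1_T2_disjoint]
    using T1_T2_disjoint by (intro arg_cong2[where f = "(+)"] sum.cong) auto
  also have "\<dots> = kernel_op (T1 \<union> T2) (\<lambda>pq. if pq \<in> T1 then c1 else c2) f g k"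
    using fin unfolding kernel_op_def X_def case_prod_unfold by (simp add: mult.assoc)
  finally show "sigma_op c1 c2 f g k = kernel_op (T1 \<union> T2) (\<lambda>pq. if pq \<in> T1 then c1 else c2) f g k" .
qed

lemma sigma_op_not_assoc:
  assumes "(c1, c2) \<noteq> (0, 0)"
  shows "\<not> assoc_on (Lam plastic) (sigma_op c1 c2)"
proof (cases "c1 = 0")
  case False
  have "(plastic powi 3, - (plastic powi 1)) \<in> T1" "(plastic powi -3, plastic powi (1 - 3)) \<in> T1"
    by (simp_all add: T1_def)
  with False plastic_gt_1 show ?thesis
    unfolding sigma_op_eq_kernel_op
    by (intro kernel_op_not_assoc_power_int[OF T1_T2_on_line, where m = 3 and n = 1]) auto
next
  case True
  have "(plastic powi 5, - (plastic powi 4)) \<in> T2 - T1"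
    "(plastic powi -5, plastic powi (4 - 5)) \<in> T2 - T1"
    using T1_T2_disjoint by (auto simp: T2_def)
  with True assms plastic_gt_1 show ?thesis
    unfolding sigma_op_eq_kernel_op
    by (intro kernel_op_not_assoc_power_int[OF T1_T2_on_line, where m = 5 and n = 4]) auto
qed

theorem corollary1:
  fixes l :: real
  assumes "l = 2 \<or> l = plastic \<or>
    (\<exists>a b :: nat. l > 1 \<and> 1 = l ^ b - l ^ a \<and> coprime a b \<and> a < b \<and> b \<le> 62 \<and>
        (a, b) \<notin> {(1, 3), (4, 5)})"
  shows "(l \<noteq> plastic \<longrightarrow> (\<forall>c::complex. c \<noteq> 0 \<longrightarrow> \<not> assoc_on (Lam l) (gen_op l c))) \<and>
         (l = plastic \<longrightarrow> (\<forall>c1 c2 :: complex. (c1, c2) \<noteq> (0, 0) \<longrightarrow> \<not> assoc_on (Lam l) (sigma_op c1 c2)))"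
proof (intro conjI impI allI)
  fix c1 c2 :: complex
  assume "l = plastic" "(c1, c2) \<noteq> (0, 0)"
  then show "\<not> assoc_on (Lam l) (sigma_op c1 c2)" using sigma_op_not_assoc by simp
next
  fix c :: complex
  assume "l \<noteq> plastic" "c \<noteq> 0"
  from assms \<open>l \<noteq> plastic\<close> consider "l = 2" | a b :: nat where "l > 1" "l ^ b - l ^ a = 1"
    by force
  then show "\<not> assoc_on (Lam l) (gen_op l c)"
  proof cases
    case 1
    then show ?thesis using gen_op_not_assoc[of l 1 0] \<open>c \<noteq> 0\<close> by simp
  next
    case (2 a b)
    then show ?thesis using gen_op_not_assoc[of l "int b" "int a"] \<open>c \<noteq> 0\<close> by simp
  qed
qed

end
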